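(* Let $(L_i,\mathbf v_i)$, $i\in\{1,2,3,4\}$, be four pairwise transverse decorated Lagrangians in $\mathbf R^{2n}$. Then the matrix of the cross ratio $[L_1,L_2,L_3,L_4]$ in the basis $\mathbf v_1$ of $L_1$ is $$[L_1,L_2,L_3,L_4]_{\mathbf v_1}=-\Lambda_{31}^{-1}\Lambda_{34}\Lambda_{14}^{-1}\Lambda_{12}\Lambda_{32}^{-1}\Lambda_{31}=-\Lambda_{41}^{-1}\Lambda_{43}\Lambda_{23}^{-1}\Lambda_{21}.$$
   Context: $\mathbf R^{2n}$ carries the standard symplectic form $\omega(x,y)={}^T x\begin{pmatrix}0&\mathrm{Id}\\-\mathrm{Id}&0\end{pmatrix}y$. A decorated Lagrangian $(L,\mathbf v)$ is a Lagrangian subspace with a chosen basis; transverse means trivial intersection; $\Lambda_{ij}=(\omega(v_{i,k},v_{j,l}))_{k,l}$. If $M$ and $L_1$ are Lagrangians transverse to a Lagrangian $L_2$, $M_{L_1\to L_2}\colon L_1\to L_2$ denotes the unique linear map with graph $M$. For Lagrangians $L_1,M_1,L_2,M_2$ with $L_1\pitchfork L_2$, $M_1\pitchfork L_2$, $M_2\pitchfork L_1$, the cross ratio is the endomorphism $[L_1,M_1,L_2,M_2]=-(M_2)_{L_2\to L_1}\circ(M_1)_{L_1\to L_2}$ of $L_1$. (In the claim, the roles are $M_1=L_2$, $L_2=L_3$, $M_2=L_4$.) *)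

theory Defs
  imports "HOL-Analysis.Analysis"
begin

text \<open>R^{2n} is modelled as pairs (x,y) of vectors in R^n; the standard symplectic form
  omega(u,w) = u^T [[0,Id],[-Id,0]] w = x_u . y_w - y_u . x_w.\<close>

type_synonym 'n sympl = "(real^'n) \<times> (real^'n)"

definition omega :: "'n::finite sympl \<Rightarrow> 'n sympl \<Rightarrow> real" where
  "omega u w = fst u \<bullet> snd w - snd u \<bullet> fst w"

definition lagrangian :: "'n::finite sympl set \<Rightarrow> bool" where
  "lagrangian L \<longleftrightarrow> subspace L \<and> dim L = CARD('n) \<and> (\<forall>x\<in>L. \<forall>y\<in>L. omega x y = 0)"

definition decorated_lagrangian :: "'n::finite sympl set \<Rightarrow> ('n \<Rightarrow> 'n sympl) \<Rightarrow> bool" where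
  "decorated_lagrangian L v \<longleftrightarrow> lagrangian L \<and> inj v \<and> independent (range v) \<and> span (range v) = L"

definition transverse :: "'n::finite sympl set \<Rightarrow> 'n sympl set \<Rightarrow> bool" where
  "transverse L M \<longleftrightarrow> L \<inter> M = {0}"

definition Lam :: "('n::finite \<Rightarrow> 'n sympl) \<Rightarrow> ('n \<Rightarrow> 'n sympl) \<Rightarrow> real^'n^'n" where
  "Lam vi vj = (\<chi> k l. omega (vi k) (vj l))"

text \<open>For M, L1 transverse to L2: the map L1 -> L2 whose graph is M, i.e. x maps to the unique
  y in L2 with x + y in M.\<close>
definition graph_map :: "'n::finite sympl set \<Rightarrow> 'n sympl set \<Rightarrow> 'n sympl set \<Rightarrow> 'n sympl \<Rightarrow> 'n sympl" where
  "graph_map M L1 L2 x = (THE y. y \<in> L2 \<and> x + y \<in> M)"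

definition cross_ratio :: "'n::finite sympl set \<Rightarrow> 'n sympl set \<Rightarrow> 'n sympl set \<Rightarrow> 'n sympl set \<Rightarrow> 'n sympl \<Rightarrow> 'n sympl" where
  "cross_ratio L1 M1 L2 M2 x = - graph_map M2 L2 L1 (graph_map M1 L1 L2 x)"

definition matrix_in_basis :: "('n::finite sympl \<Rightarrow> 'n sympl) \<Rightarrow> ('n \<Rightarrow> 'n sympl) \<Rightarrow> real^'n^'n \<Rightarrow> bool" where
  "matrix_in_basis T v A \<longleftrightarrow> (\<forall>l. T (v l) = (\<Sum>k\<in>UNIV. (A$k$l) *\<^sub>R v k))"

end

theory Submission
  imports Defs
begin

(* Pairing with the basis of a Lagrangian M turns the condition x + y : M into the linear
   system Lam_M1 a + Lam_M2 b = 0 on the coordinates a of x and b of y, so the graph map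
   M_{L1->L2} has matrix -Lam_M2^-1 Lam_M1; Lam_M2 is invertible because transverse Lagrangians
   span the whole space and omega is nondegenerate. Composing two such maps gives the second
   formula. For an isotropic family w, decomposing each w_k along L1 + L3 yields
   Lam_w1 Lam_31^-1 Lam_3w + Lam_w3 Lam_13^-1 Lam_1w = 0; with w = v4 and w = v2 this turns the
   first formula into the second. *)

definition lin_comb :: "('n::finite \<Rightarrow> 'n sympl) \<Rightarrow> real^'n \<Rightarrow> 'n sympl" where
  "lin_comb v a = (\<Sum>k\<in>UNIV. (a$k) *\<^sub>R v k)"

lemma lin_comb_uminus: "lin_comb v (- a) = - lin_comb v a"
  by (simp add: lin_comb_def sum_negf)

lemma lin_comb_axis: "lin_comb v (axis l 1) = v l"
proof -
  have "lin_comb v (axis l 1) = (\<Sum>k\<in>UNIV. if k = l then v k else 0)"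
    unfolding lin_comb_def axis_def by (intro sum.cong) auto
  then show ?thesis by simp
qed

lemma omega_add_left: "omega (x + y) z = omega x z + omega y z"
  by (simp add: omega_def inner_add_left)

lemma omega_add_right: "omega z (x + y) = omega z x + omega z y"
  by (simp add: omega_def inner_add_right)

lemma omega_lin_comb_left: "omega (lin_comb v a) u = (\<Sum>l\<in>UNIV. a$l * omega (v l) u)"
  by (simp add: lin_comb_def omega_def fst_sum snd_sum inner_sum_left
      sum_subtractf algebra_simps)

lemma omega_lin_comb_right: "omega u (lin_comb v a) = (\<Sum>l\<in>UNIV. a$l * omega u (v l))"
  by (simp add: lin_comb_def omega_def fst_sum snd_sum inner_sum_right
      sum_subtractf algebra_simps sum_distrib_left)

lemma omega_nondegenerate:
  assumes "\<And>u. omega u x = 0"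
  shows "x = 0"
proof -
  have "omega (snd x, 0) x = 0" "omega (0, fst x) x = 0"
    using assms by auto
  then have "snd x \<bullet> snd x = 0" "fst x \<bullet> fst x = 0"
    by (auto simp: omega_def)
  then show ?thesis
    by (simp add: prod_eq_iff)
qed

lemma lagrangian_omega_eq_0: "lagrangian L \<Longrightarrow> x \<in> L \<Longrightarrow> y \<in> L \<Longrightarrow> omega x y = 0"
  by (simp add: lagrangian_def)

lemma transverse_sym: "transverse L M \<Longrightarrow> transverse M L"
  by (simp add: transverse_def Int_commute)

lemma lagrangian_transverse_sum:
  fixes L M :: "'n::finite sympl set"
  assumes L: "lagrangian L" and M: "lagrangian M" and "transverse L M"
  obtains p q where "p \<in> L" "q \<in> M" "x = p + q"
proof -
  define S where "S = {p + q |p q. p \<in> L \<and> q \<in> M}"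
  have "subspace L" "subspace M" "dim L = CARD('n)" "dim M = CARD('n)"
    using L M by (auto simp: lagrangian_def)
  moreover have "L \<inter> M = {0}"
    using \<open>transverse L M\<close> by (simp add: transverse_def)
  ultimately have "dim S = DIM('n sympl)"
    using dim_sums_Int[of L M] unfolding S_def by simp
  moreover have "subspace S"
    unfolding S_def by (rule subspace_sums) fact+
  ultimately have "S = UNIV"
    by (metis dim_eq_full span_eq_iff)
  then show ?thesis
    using that unfolding S_def by blast
qed

lemma decorated_lagrangian_lin_comb_mem:
  assumes "decorated_lagrangian L v"
  shows "lin_comb v a \<in> L"
proof -
  have "lin_comb v a \<in> span (range v)"
    unfolding lin_comb_def by (intro span_sum span_scale span_base) auto
  then show ?thesis
    using assms by (simp add: decorated_lagrangian_def)
qed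

lemma decorated_lagrangian_basis_mem: "decorated_lagrangian L v \<Longrightarrow> v k \<in> L"
  using decorated_lagrangian_lin_comb_mem[of L v "axis k 1"] by (simp add: lin_comb_axis)

lemma decorated_lagrangian_obtain_coords:
  assumes "decorated_lagrangian L v" "x \<in> L"
  obtains a where "x = lin_comb v a"
proof -
  have "inj v" "x \<in> span (range v)"
    using assms by (simp_all add: decorated_lagrangian_def)
  then obtain u where "x = (\<Sum>s\<in>range v. u s *\<^sub>R s)"
    using span_finite[of "range v"] by auto
  also have "\<dots> = lin_comb v (\<chi> k. u (v k))"
    using \<open>inj v\<close> by (simp add: lin_comb_def sum.reindex)
  finally show ?thesis
    using that by blast
qed

lemma decorated_lagrangian_lin_comb_eq_0:
  assumes "decorated_lagrangian L v" "lin_comb v a = 0"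
  shows "a = 0"
proof -
  have "inj v" and indep: "independent (range v)"
    using assms by (auto simp: decorated_lagrangian_def)
  define c where "c s = a $ inv v s" for s
  have c_v: "c (v k) = a $ k" for k
    using \<open>inj v\<close> by (simp add: c_def)
  have "(\<Sum>s\<in>range v. c s *\<^sub>R s) = lin_comb v a"
    using \<open>inj v\<close> by (simp add: sum.reindex c_v lin_comb_def)
  then have "\<forall>s\<in>range v. c s = 0"
    using indep assms(2) by (simp add: independent_explicit)
  then show ?thesis
    by (simp add: vec_eq_iff flip: c_v)
qed

lemma Lam_mult_vec: "Lam u v *v a = (\<chi> k. omega (u k) (lin_comb v a))"
  by (simp add: vec_eq_iff Lam_def omega_lin_comb_right matrix_vector_mult_def mult.commute)

lemma Lam_self_eq_0:
  assumes "decorated_lagrangian L v"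
  shows "Lam v v = 0"
  using assms decorated_lagrangian_basis_mem[OF assms]
  by (simp add: Lam_def vec_eq_iff decorated_lagrangian_def lagrangian_def)

lemma matrix_inv_right: "invertible (A::real^'n^'n) \<Longrightarrow> A ** matrix_inv A = mat 1"
  and matrix_inv_left: "invertible (A::real^'n^'n) \<Longrightarrow> matrix_inv A ** A = mat 1"
  unfolding invertible_def matrix_inv_def by (metis (mono_tags, lifting) someI_ex)+

lemma matrix_inv_mul_cancel: "invertible (A::real^'n^'n) \<Longrightarrow> X ** matrix_inv A ** A = X"
  by (metis matrix_mul_assoc matrix_mul_rid matrix_inv_left)

lemma matrix_mul_inv_cancel: "invertible (A::real^'n^'n) \<Longrightarrow> X ** A ** matrix_inv A = X"
  by (metis matrix_mul_assoc matrix_mul_rid matrix_inv_right)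

lemma matrix_inv_solve:
  assumes "invertible (A::real^'n^'n)" "A *v b = c"
  shows "b = matrix_inv A *v c"
  using assms by (simp add: matrix_vector_mul_assoc matrix_inv_left flip: assms(2))

lemma matrix_mul_uminus_left: "(- (A::real^'n^'m)) ** B = - (A ** B)"
  by (simp add: vec_eq_iff matrix_matrix_mult_def sum_negf)

lemma matrix_mul_uminus_right: "(A::real^'n^'m) ** (- B) = - (A ** B)"
  by (simp add: vec_eq_iff matrix_matrix_mult_def sum_negf)

lemma matrix_vector_mult_uminus_left: "(- (A::real^'n^'m)) *v x = - (A *v x)"
  by (simp add: vec_eq_iff matrix_vector_mult_def sum_negf)

lemma matrix_vector_mult_uminus_right: "(A::real^'n^'m) *v (- x) = - (A *v x)"
  by (simp add: vec_eq_iff matrix_vector_mult_def sum_negf)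

lemma matrix_cross_ratio_identity:
  fixes A12 A13 A14 A21 A23 A31 A32 A34 A41 A43 :: "real^'n^'n"
  assumes inv: "invertible A13" "invertible A14" "invertible A23"
    "invertible A31" "invertible A32" "invertible A41"
    and R4: "A41 ** matrix_inv A31 ** A34 + A43 ** matrix_inv A13 ** A14 = 0"
    and R2: "A21 ** matrix_inv A31 ** A32 + A23 ** matrix_inv A13 ** A12 = 0"
  shows "matrix_inv A31 ** A34 ** matrix_inv A14 ** A12 ** matrix_inv A32 ** A31
       = matrix_inv A41 ** A43 ** matrix_inv A23 ** A21"
proof -
  note cancel = matrix_mul_assoc matrix_inv_left matrix_inv_mul_cancel matrix_mul_inv_cancel
    matrix_mul_uminus_left matrix_mul_uminus_right
  have r4: "A41 ** matrix_inv A31 ** A34 = - (A43 ** matrix_inv A13 ** A14)"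
    using R4 by (simp add: eq_neg_iff_add_eq_0)
  have r2: "A23 ** matrix_inv A13 ** A12 = - (A21 ** matrix_inv A31 ** A32)"
    using R2 by (simp add: eq_neg_iff_add_eq_0 add.commute)
  have "matrix_inv A31 ** A34 ** matrix_inv A14
      = matrix_inv A41 ** (A41 ** matrix_inv A31 ** A34) ** matrix_inv A14"
    using inv by (simp add: cancel)
  also have "\<dots> = - (matrix_inv A41 ** A43 ** matrix_inv A13)"
    unfolding r4 using inv by (simp add: cancel)
  finally have h4: "matrix_inv A31 ** A34 ** matrix_inv A14
      = - (matrix_inv A41 ** A43 ** matrix_inv A13)" .
  have "matrix_inv A13 ** A12 ** matrix_inv A32 ** A31
      = matrix_inv A23 ** (A23 ** matrix_inv A13 ** A12) ** matrix_inv A32 ** A31"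
    using inv by (simp add: cancel)
  also have "\<dots> = - (matrix_inv A23 ** A21)"
    unfolding r2 using inv by (simp add: cancel)
  finally have h2: "matrix_inv A13 ** A12 ** matrix_inv A32 ** A31 = - (matrix_inv A23 ** A21)" .
  have "matrix_inv A31 ** A34 ** matrix_inv A14 ** A12 ** matrix_inv A32 ** A31
      = - (matrix_inv A41 ** A43 ** (matrix_inv A13 ** A12 ** matrix_inv A32 ** A31))"
    by (simp add: h4 cancel)
  then show ?thesis
    by (simp add: h2 cancel)
qed

lemma invertible_Lam:
  assumes L: "decorated_lagrangian L v" and M: "decorated_lagrangian M w"
    and "transverse L M"
  shows "invertible (Lam v w)"
proof -
  have "b = 0" if b: "Lam v w *v b = 0" for b
  proof -
    let ?y = "lin_comb w b"
    have "omega u ?y = 0" for u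
    proof -
      have "lagrangian L" "lagrangian M"
        using L M by (simp_all add: decorated_lagrangian_def)
      then obtain p q where "p \<in> L" "q \<in> M" "u = p + q"
        using lagrangian_transverse_sum \<open>transverse L M\<close> by blast
      moreover obtain a where "p = lin_comb v a"
        using decorated_lagrangian_obtain_coords[OF L \<open>p \<in> L\<close>] by blast
      moreover have "omega (v l) ?y = 0" for l
        using b by (simp add: Lam_mult_vec vec_eq_iff)
      moreover have "omega q ?y = 0"
        using \<open>lagrangian M\<close> \<open>q \<in> M\<close> decorated_lagrangian_lin_comb_mem[OF M]
        by (rule lagrangian_omega_eq_0)
      ultimately show ?thesis
        by (simp add: omega_add_left omega_lin_comb_left)
    qed
    then show "b = 0"
      using omega_nondegenerate decorated_lagrangian_lin_comb_eq_0[OF M] by blast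
  qed
  then show ?thesis
    using matrix_left_invertible_ker invertible_left_inverse by blast
qed

lemma graph_map_mem:
  fixes M L2 :: "'n::finite sympl set"
  assumes M: "lagrangian M" and L2: "lagrangian L2" and "transverse M L2"
  shows "graph_map M L1 L2 x \<in> L2" "x + graph_map M L1 L2 x \<in> M"
proof -
  have "subspace M" "subspace L2"
    using M L2 by (simp_all add: lagrangian_def)
  have "\<exists>!y. y \<in> L2 \<and> x + y \<in> M"
  proof (rule ex_ex1I)
    obtain p q where "p \<in> M" "q \<in> L2" "x = p + q"
      using lagrangian_transverse_sum[OF M L2 \<open>transverse M L2\<close>] by blast
    then show "\<exists>y. y \<in> L2 \<and> x + y \<in> M"
      using \<open>subspace L2\<close> by (intro exI[of _ "- q"]) (simp add: subspace_neg)
  next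
    fix y y' assume "y \<in> L2 \<and> x + y \<in> M" "y' \<in> L2 \<and> x + y' \<in> M"
    then have "y - y' \<in> L2" "(x + y) - (x + y') \<in> M"
      using \<open>subspace L2\<close> \<open>subspace M\<close> by (blast intro: subspace_diff)+
    then have "y - y' \<in> M \<inter> L2"
      by (metis IntI add_diff_cancel_left)
    then show "y = y'"
      using \<open>transverse M L2\<close> unfolding transverse_def by simp
  qed
  then have "graph_map M L1 L2 x \<in> L2 \<and> x + graph_map M L1 L2 x \<in> M"
    unfolding graph_map_def by (rule theI')
  then show "graph_map M L1 L2 x \<in> L2" "x + graph_map M L1 L2 x \<in> M"
    by simp_all
qed

lemma graph_map_lin_comb:
  assumes M: "decorated_lagrangian M u" and L2: "decorated_lagrangian L2 v2"
    and "transverse M L2"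
  shows "graph_map M L1 L2 (lin_comb v1 a)
    = lin_comb v2 (- (matrix_inv (Lam u v2) ** Lam u v1) *v a)"
proof -
  let ?y = "graph_map M L1 L2 (lin_comb v1 a)"
  have "lagrangian M" "lagrangian L2"
    using M L2 by (simp_all add: decorated_lagrangian_def)
  then have "?y \<in> L2" "lin_comb v1 a + ?y \<in> M"
    using graph_map_mem \<open>transverse M L2\<close> by blast+
  obtain b where b: "?y = lin_comb v2 b"
    using decorated_lagrangian_obtain_coords[OF L2 \<open>?y \<in> L2\<close>] by blast
  have "omega (u k) (lin_comb v1 a + ?y) = 0" for k
    using \<open>lagrangian M\<close> decorated_lagrangian_basis_mem[OF M] \<open>lin_comb v1 a + ?y \<in> M\<close>
    by (rule lagrangian_omega_eq_0)
  then have "Lam u v2 *v b = - (Lam u v1 *v a)"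
    by (simp add: Lam_mult_vec vec_eq_iff omega_add_right b eq_neg_iff_add_eq_0 add.commute)
  then have "b = matrix_inv (Lam u v2) *v - (Lam u v1 *v a)"
    by (rule matrix_inv_solve[OF invertible_Lam[OF M L2 \<open>transverse M L2\<close>]])
  then have "b = - (matrix_inv (Lam u v2) ** Lam u v1) *v a"
    by (simp only: matrix_vector_mult_uminus_left matrix_vector_mult_uminus_right
        matrix_vector_mul_assoc)
  then show ?thesis
    using b by simp
qed

lemma Lam_isotropic_identity:
  assumes L1: "decorated_lagrangian L1 v1" and L3: "decorated_lagrangian L3 v3"
    and "transverse L1 L3" and "Lam w w = 0"
  shows "Lam w v1 ** matrix_inv (Lam v3 v1) ** Lam v3 w
       + Lam w v3 ** matrix_inv (Lam v1 v3) ** Lam v1 w = 0"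
proof -
  have "lagrangian L1" "lagrangian L3"
    using L1 L3 by (simp_all add: decorated_lagrangian_def)
  have "(Lam w v1 ** matrix_inv (Lam v3 v1) ** Lam v3 w
       + Lam w v3 ** matrix_inv (Lam v1 v3) ** Lam v1 w) *v y = 0" for y
  proof -
    obtain p q where "p \<in> L1" "q \<in> L3" and y: "lin_comb w y = p + q"
      using lagrangian_transverse_sum \<open>lagrangian L1\<close> \<open>lagrangian L3\<close> \<open>transverse L1 L3\<close>
      by blast
    obtain \<alpha> \<beta> where p: "p = lin_comb v1 \<alpha>" and q: "q = lin_comb v3 \<beta>"
      using decorated_lagrangian_obtain_coords L1 L3 \<open>p \<in> L1\<close> \<open>q \<in> L3\<close> by metis
    have "omega (v3 k) q = 0" "omega (v1 k) p = 0" for k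
      using lagrangian_omega_eq_0 decorated_lagrangian_basis_mem L1 L3 \<open>lagrangian L1\<close>
        \<open>lagrangian L3\<close> \<open>p \<in> L1\<close> \<open>q \<in> L3\<close> by blast+
    then have "Lam v3 v1 *v \<alpha> = Lam v3 w *v y" "Lam v1 v3 *v \<beta> = Lam v1 w *v y"
      by (simp_all add: Lam_mult_vec y omega_add_right flip: p q)
    then have \<alpha>: "\<alpha> = matrix_inv (Lam v3 v1) *v (Lam v3 w *v y)"
      and \<beta>: "\<beta> = matrix_inv (Lam v1 v3) *v (Lam v1 w *v y)"
      using matrix_inv_solve invertible_Lam L1 L3 \<open>transverse L1 L3\<close> transverse_sym by blast+
    have "Lam w v1 *v \<alpha> + Lam w v3 *v \<beta> = Lam w w *v y"
      by (simp add: Lam_mult_vec vec_eq_iff y p q omega_add_right)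
    then show ?thesis
      using \<open>Lam w w = 0\<close>
      by (simp add: \<alpha> \<beta> matrix_vector_mult_add_rdistrib matrix_vector_mul_assoc matrix_mul_assoc)
  qed
  then show ?thesis
    by (simp add: matrix_eq)
qed

lemma matrix_in_basisI:
  assumes "\<And>a. T (lin_comb v a) = lin_comb v (A *v a)"
  shows "matrix_in_basis T v A"
  unfolding matrix_in_basis_def
proof
  fix l
  have "T (v l) = lin_comb v (A *v axis l 1)"
    using assms[of "axis l 1"] by (simp add: lin_comb_axis)
  then show "T (v l) = (\<Sum>k\<in>UNIV. (A$k$l) *\<^sub>R v k)"
    by (simp add: lin_comb_def matrix_vector_mult_basis column_def)
qed

lemma cross_ratio_lin_comb:
  assumes L1: "decorated_lagrangian L1 v1" and L2: "decorated_lagrangian L2 v2"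
    and L3: "decorated_lagrangian L3 v3" and L4: "decorated_lagrangian L4 v4"
    and "transverse L2 L3" "transverse L4 L1"
  shows "cross_ratio L1 L2 L3 L4 (lin_comb v1 a)
    = lin_comb v1 (- (matrix_inv (Lam v4 v1) ** Lam v4 v3 ** matrix_inv (Lam v2 v3) ** Lam v2 v1) *v a)"
  using assms
  by (simp add: cross_ratio_def graph_map_lin_comb lin_comb_uminus[symmetric]
      matrix_vector_mult_uminus_left matrix_vector_mult_uminus_right
      matrix_mul_uminus_left matrix_mul_uminus_right matrix_vector_mul_assoc matrix_mul_assoc)

theorem lemma3p19:
  fixes L1 L2 L3 L4 :: "'n::finite sympl set"
    and v1 v2 v3 v4 :: "'n \<Rightarrow> 'n sympl"
  assumes "decorated_lagrangian L1 v1" "decorated_lagrangian L2 v2"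
    and "decorated_lagrangian L3 v3" "decorated_lagrangian L4 v4"
    and "transverse L1 L2" "transverse L1 L3" "transverse L1 L4"
    and "transverse L2 L3" "transverse L2 L4" "transverse L3 L4"
  shows "matrix_in_basis (cross_ratio L1 L2 L3 L4) v1
           (- (matrix_inv (Lam v3 v1) ** Lam v3 v4 ** matrix_inv (Lam v1 v4) ** Lam v1 v2
               ** matrix_inv (Lam v3 v2) ** Lam v3 v1))
      \<and> - (matrix_inv (Lam v3 v1) ** Lam v3 v4 ** matrix_inv (Lam v1 v4) ** Lam v1 v2
               ** matrix_inv (Lam v3 v2) ** Lam v3 v1)
        = - (matrix_inv (Lam v4 v1) ** Lam v4 v3 ** matrix_inv (Lam v2 v3) ** Lam v2 v1)"
proof -
  note L = assms(1-4) and transverse = assms(5-10) assms(5-10)[THEN transverse_sym]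
  have "matrix_inv (Lam v3 v1) ** Lam v3 v4 ** matrix_inv (Lam v1 v4) ** Lam v1 v2
          ** matrix_inv (Lam v3 v2) ** Lam v3 v1
      = matrix_inv (Lam v4 v1) ** Lam v4 v3 ** matrix_inv (Lam v2 v3) ** Lam v2 v1"
    using L transverse
    by (intro matrix_cross_ratio_identity[where ?A13.0 = "Lam v1 v3"] invertible_Lam
        Lam_isotropic_identity Lam_self_eq_0)
  moreover have "matrix_in_basis (cross_ratio L1 L2 L3 L4) v1
      (- (matrix_inv (Lam v4 v1) ** Lam v4 v3 ** matrix_inv (Lam v2 v3) ** Lam v2 v1))"
    using L transverse by (intro matrix_in_basisI cross_ratio_lin_comb)
  ultimately show ?thesis
    by simp
qed

end
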